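(* Let $\Omega\subset\mathbb{R}^N$ be a bounded Lipschitz domain with outward unit normal $n$, let $A:\bar\Omega\to\mathcal{M}_{N\times N}(\mathbb{R})$ be a smooth uniformly elliptic matrix field, let $r\in C^{0,1}(\bar\Omega)$ with $r>0$, let $k\in C^{0,1}(\bar\Omega)$ with $k>0$, and let $p\ge1$. Let $\lambda_1$ be the first eigenvalue of $\nabla\cdot(A\nabla\,\cdot)+r$ with Neumann boundary condition and $\phi_1>0$ an associated eigenfunction ($\nabla\cdot(A\nabla\phi_1)+r\phi_1=-\lambda_1\phi_1$ in $\Omega$, $\partial_n\phi_1=0$ on $\partial\Omega$). If $\lambda_1<0$, then there exists $\mu>0$ such that $\mu\phi_1$ is a positive stationary solution of $$\frac{\partial u}{\partial t}=u\Big(r(x)-\int_\Omega k(y)|u(t,y)|^p\,dy\Big)+\nabla\cdot(A(x)\nabla u)\ \text{ in }(0,\infty)\times\Omega,\qquad\frac{\partial u}{\partial n}=0\ \text{ on }(0,\infty)\times\partial\Omega.$$ *)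

theory Defs
  imports "HOL-Analysis.Analysis"
begin

text \<open>Space R^N is modelled as real^'n with 'n a finite index type (N = CARD('n)).\<close>

definition grad :: "(real^'n \<Rightarrow> real) \<Rightarrow> real^'n \<Rightarrow> real^'n" where
  "grad f x = (\<chi> i. frechet_derivative f (at x) (axis i 1))"

definition divergence :: "(real^'n \<Rightarrow> real^'n) \<Rightarrow> real^'n \<Rightarrow> real" where
  "divergence F x = (\<Sum>i\<in>UNIV. frechet_derivative F (at x) (axis i 1) $ i)"

fun Ck_on :: "nat \<Rightarrow> (real^'n) set \<Rightarrow> (real^'n \<Rightarrow> real) \<Rightarrow> bool" where
  "Ck_on 0 U f = continuous_on U f"
| "Ck_on (Suc k) U f = (continuous_on U f \<and> (\<forall>x\<in>U. f differentiable (at x)) \<and>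
      (\<forall>i. Ck_on k U (\<lambda>x. frechet_derivative f (at x) (axis i 1))))"

definition smooth_matrix_on :: "(real^'n) set \<Rightarrow> (real^'n \<Rightarrow> real^'n^'n) \<Rightarrow> bool" where
  "smooth_matrix_on S A \<longleftrightarrow> (\<exists>U. open U \<and> S \<subseteq> U \<and>
      (\<forall>i j k. Ck_on k U (\<lambda>x. A x $ i $ j)))"

definition uniformly_elliptic_on :: "(real^'n) set \<Rightarrow> (real^'n \<Rightarrow> real^'n^'n) \<Rightarrow> bool" where
  "uniformly_elliptic_on S A \<longleftrightarrow> (\<exists>\<theta>>0. \<forall>x\<in>S. \<forall>\<xi>. (A x *v \<xi>) \<bullet> \<xi> \<ge> \<theta> * (norm \<xi>)\<^sup>2)"

definition lipschitz_domain :: "(real^'n) set \<Rightarrow> bool" where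
  "lipschitz_domain \<Omega> \<longleftrightarrow> open \<Omega> \<and> connected \<Omega> \<and> \<Omega> \<noteq> {} \<and> bounded \<Omega> \<and>
     (\<forall>x\<in>frontier \<Omega>. \<exists>d::real^'n. \<exists>\<gamma>::real^'n \<Rightarrow> real. \<exists>C. \<exists>\<delta>>0.
        norm d = 1 \<and> C-lipschitz_on UNIV \<gamma> \<and>
        (\<forall>y\<in>ball x \<delta>. y \<in> \<Omega> \<longleftrightarrow> y \<bullet> d < \<gamma> (y - (y \<bullet> d) *\<^sub>R d)))"

text \<open>v is the outward unit normal to \<Omega> at the boundary point x (wherever it exists;
  for a Lipschitz domain this is almost every boundary point).\<close>
definition outward_normal :: "(real^'n) set \<Rightarrow> real^'n \<Rightarrow> real^'n \<Rightarrow> bool" where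
  "outward_normal \<Omega> x v \<longleftrightarrow> x \<in> frontier \<Omega> \<and> norm v = 1 \<and>
     (\<forall>\<epsilon>>0. \<exists>\<delta>>0. \<forall>y\<in>ball x \<delta>.
        ((y - x) \<bullet> v < - \<epsilon> * norm (y - x) \<longrightarrow> y \<in> \<Omega>) \<and>
        ((y - x) \<bullet> v > \<epsilon> * norm (y - x) \<longrightarrow> y \<notin> closure \<Omega>))"

text \<open>u is C^1 up to the boundary (gradient extends continuously to the closure) and
  satisfies the homogeneous Neumann condition du/dn = 0 at every boundary point
  where the outward unit normal exists.\<close>
definition neumann_bc :: "(real^'n) set \<Rightarrow> (real^'n \<Rightarrow> real) \<Rightarrow> bool" where
  "neumann_bc \<Omega> u \<longleftrightarrow> continuous_on (closure \<Omega>) u \<and> (\<forall>x\<in>\<Omega>. u differentiable (at x)) \<and>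
     (\<exists>g. continuous_on (closure \<Omega>) g \<and> (\<forall>x\<in>\<Omega>. g x = grad u x) \<and>
          (\<forall>x v. outward_normal \<Omega> x v \<longrightarrow> g x \<bullet> v = 0))"

definition neumann_eigenpair ::
  "(real^'n) set \<Rightarrow> (real^'n \<Rightarrow> real^'n^'n) \<Rightarrow> (real^'n \<Rightarrow> real) \<Rightarrow> real \<Rightarrow> (real^'n \<Rightarrow> real) \<Rightarrow> bool" where
  "neumann_eigenpair \<Omega> A r lam \<phi> \<longleftrightarrow> neumann_bc \<Omega> \<phi> \<and>
     (\<forall>x\<in>\<Omega>. (\<lambda>y. A y *v grad \<phi> y) differentiable (at x)) \<and>
     (\<forall>x\<in>\<Omega>. divergence (\<lambda>y. A y *v grad \<phi> y) x + r x * \<phi> x = - lam * \<phi> x) \<and>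
     (\<exists>x\<in>\<Omega>. \<phi> x \<noteq> 0)"

definition first_neumann_eigenvalue ::
  "(real^'n) set \<Rightarrow> (real^'n \<Rightarrow> real^'n^'n) \<Rightarrow> (real^'n \<Rightarrow> real) \<Rightarrow> real \<Rightarrow> bool" where
  "first_neumann_eigenvalue \<Omega> A r lam \<longleftrightarrow> (\<exists>\<phi>. neumann_eigenpair \<Omega> A r lam \<phi>) \<and>
     (\<forall>\<mu> \<phi>. neumann_eigenpair \<Omega> A r \<mu> \<phi> \<longrightarrow> lam \<le> \<mu>)"

definition nonlocal_solution ::
  "(real^'n) set \<Rightarrow> (real^'n \<Rightarrow> real^'n^'n) \<Rightarrow> (real^'n \<Rightarrow> real) \<Rightarrow> (real^'n \<Rightarrow> real) \<Rightarrow> real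
     \<Rightarrow> (real \<Rightarrow> real^'n \<Rightarrow> real) \<Rightarrow> bool" where
  "nonlocal_solution \<Omega> A r k p u \<longleftrightarrow> (\<forall>t>0.
     neumann_bc \<Omega> (u t) \<and>
     (\<forall>x\<in>\<Omega>. (\<lambda>y. A y *v grad (u t) y) differentiable (at x)) \<and>
     (\<lambda>y. k y * \<bar>u t y\<bar> powr p) integrable_on \<Omega> \<and>
     (\<forall>x\<in>\<Omega>. ((\<lambda>s. u s x) has_real_derivative
        (u t x * (r x - integral \<Omega> (\<lambda>y. k y * \<bar>u t y\<bar> powr p))
          + divergence (\<lambda>y. A y *v grad (u t) y) x)) (at t)))"

definition positive_stationary_solution ::
  "(real^'n) set \<Rightarrow> (real^'n \<Rightarrow> real^'n^'n) \<Rightarrow> (real^'n \<Rightarrow> real) \<Rightarrow> (real^'n \<Rightarrow> real) \<Rightarrow> real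
     \<Rightarrow> (real^'n \<Rightarrow> real) \<Rightarrow> bool" where
  "positive_stationary_solution \<Omega> A r k p v \<longleftrightarrow>
     nonlocal_solution \<Omega> A r k p (\<lambda>t. v) \<and> (\<forall>x\<in>\<Omega>. v x > 0)"

end

theory Submission
  imports Defs
begin

text \<open>The Neumann eigenproblem is linear while the nonlocal term is homogeneous of degree \<open>p\<close>:
  for \<open>u = \<mu> \<phi>\<^sub>1\<close> the stationary equation reduces to
  \<open>\<mu>\<^sup>p \<integral>\<^sub>\<Omega> k |\<phi>\<^sub>1|\<^sup>p = -\<lambda>\<^sub>1\<close>, which has a positive solution \<open>\<mu>\<close> because \<open>\<lambda>\<^sub>1 < 0\<close>
  and the integral is positive (its integrand is continuous, nonnegative and positive in \<open>\<Omega>\<close>).\<close>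

lemma frechet_derivative_scaleR_right:
  assumes "f differentiable (at x)"
  shows "frechet_derivative (\<lambda>y. c *\<^sub>R f y) (at x) = (\<lambda>h. c *\<^sub>R frechet_derivative f (at x) h)"
  using has_derivative_scaleR_right[OF frechet_derivative_works[THEN iffD1, OF assms]]
  by (rule frechet_derivative_at[symmetric])

lemma grad_cmult:
  assumes "f differentiable (at x)"
  shows "grad (\<lambda>y. c * f y) x = c *\<^sub>R grad f x"
  using frechet_derivative_scaleR_right[OF assms, of c]
  by (simp add: grad_def vec_eq_iff)

lemma divergence_scaleR:
  assumes "F differentiable (at x)"
  shows "divergence (\<lambda>y. c *\<^sub>R F y) x = c * divergence F x"
  using frechet_derivative_scaleR_right[OF assms, of c]
  by (simp add: divergence_def sum_distrib_left)

lemma flux_cmult_eq: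
  assumes "u differentiable (at y)"
  shows "A y *v grad (\<lambda>z. c * u z) y = c *\<^sub>R (A y *v grad u y)"
  using grad_cmult[OF assms] by (simp add: matrix_vector_mult_scaleR)

lemma differentiable_flux_cmult:
  assumes "open S" "x \<in> S" "\<forall>y\<in>S. u differentiable (at y)"
    and "(\<lambda>y. A y *v grad u y) differentiable (at x)"
  shows "(\<lambda>y. A y *v grad (\<lambda>z. c * u z) y) differentiable (at x)"
proof -
  obtain D where "((\<lambda>y. A y *v grad u y) has_derivative D) (at x)"
    using assms(4) unfolding differentiable_def by blast
  then have "((\<lambda>y. c *\<^sub>R (A y *v grad u y)) has_derivative (\<lambda>h. c *\<^sub>R D h)) (at x)"
    by (rule has_derivative_scaleR_right)
  then have "((\<lambda>y. A y *v grad (\<lambda>z. c * u z) y) has_derivative (\<lambda>h. c *\<^sub>R D h)) (at x)"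
    by (rule has_derivative_transform_within_open[OF _ assms(1,2)])
      (simp add: flux_cmult_eq[OF assms(3)[rule_format]])
  then show ?thesis
    unfolding differentiable_def by blast
qed

lemma divergence_flux_cmult:
  assumes "open S" "x \<in> S" "\<forall>y\<in>S. u differentiable (at y)"
    and "(\<lambda>y. A y *v grad u y) differentiable (at x)"
  shows "divergence (\<lambda>y. A y *v grad (\<lambda>z. c * u z) y) x = c * divergence (\<lambda>y. A y *v grad u y) x"
proof -
  have "frechet_derivative (\<lambda>y. c *\<^sub>R (A y *v grad u y)) (at x)
      = frechet_derivative (\<lambda>y. A y *v grad (\<lambda>z. c * u z) y) (at x)"
    using assms by (intro frechet_derivative_transform_within_open[OF _ assms(1,2)])
      (simp_all add: differentiable_scaleR flux_cmult_eq)
  then have "divergence (\<lambda>y. A y *v grad (\<lambda>z. c * u z) y) x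
      = divergence (\<lambda>y. c *\<^sub>R (A y *v grad u y)) x"
    by (simp add: divergence_def)
  also have "\<dots> = c * divergence (\<lambda>y. A y *v grad u y) x"
    using divergence_scaleR[OF assms(4)] .
  finally show ?thesis .
qed

lemma neumann_bc_cmult:
  assumes "neumann_bc S u"
  shows "neumann_bc S (\<lambda>x. c * u x)"
proof -
  obtain g where g: "continuous_on (closure S) g" "\<forall>x\<in>S. g x = grad u x"
      "\<forall>x v. outward_normal S x v \<longrightarrow> g x \<bullet> v = 0"
    and u: "continuous_on (closure S) u" "\<forall>x\<in>S. u differentiable (at x)"
    using assms unfolding neumann_bc_def by blast
  show ?thesis
    unfolding neumann_bc_def
  proof (intro conjI ballI exI[of _ "\<lambda>x. c *\<^sub>R g x"])
    show "continuous_on (closure S) (\<lambda>x. c * u x)" "continuous_on (closure S) (\<lambda>x. c *\<^sub>R g x)"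
      by (intro continuous_intros u g)+
    show "(\<lambda>x. c * u x) differentiable (at x)" if "x \<in> S" for x
      using u(2) that by (simp add: differentiable_mult differentiable_const)
    show "c *\<^sub>R g x = grad (\<lambda>x. c * u x) x" if "x \<in> S" for x
      using g(2) u(2) that by (simp add: grad_cmult)
  qed (use g(3) in simp)
qed

lemma integrable_on_subset_of_compact:
  fixes h :: "'a::euclidean_space \<Rightarrow> real"
  assumes "continuous_on T h" "compact T" "S \<subseteq> T" "S \<in> lmeasurable"
  shows "h integrable_on S"
proof -
  have "bounded (h ` T)"
    using compact_continuous_image[OF assms(1,2)] by (rule compact_imp_bounded)
  then obtain M where M: "\<forall>y\<in>T. norm (h y) \<le> M"
    unfolding bounded_iff by blast
  have "h \<in> borel_measurable (lebesgue_on S)"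
    using continuous_on_subset[OF assms(1,3)] assms(4)
    by (intro continuous_imp_measurable_on_sets_lebesgue) auto
  then have "h absolutely_integrable_on S"
    by (rule measurable_bounded_by_integrable_imp_absolutely_integrable[OF _ _ integrable_on_const[OF assms(4)]])
      (use M assms(3,4) in auto)
  then show ?thesis by (simp add: absolutely_integrable_on_def)
qed

lemma integral_pos_continuous:
  fixes h :: "'a::euclidean_space \<Rightarrow> real"
  assumes "open S" "continuous_on S h" "h integrable_on S" "\<forall>y\<in>S. h y \<ge> 0"
    and "x \<in> S" "h x > 0"
  shows "integral S h > 0"
proof -
  have "isCont h x"
    using assms(1,2,5) continuous_on_eq_continuous_at by blast
  then obtain e where e: "e > 0" "\<forall>y. dist y x < e \<longrightarrow> dist (h y) (h x) < h x / 2"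
    using assms(6) unfolding continuous_at_eps_delta by (meson half_gt_zero)
  obtain e' where e': "e' > 0" "cball x e' \<subseteq> S"
    using assms(1,5) open_contains_cball by blast
  define d where "d = min (e / 2) e'"
  have d: "d > 0" "cball x d \<subseteq> S"
    using e(1) e' cball_subset_cball_iff[of x d x e'] unfolding d_def by auto
  have d_lower: "h y \<ge> h x / 2" if "y \<in> cball x d" for y
  proof -
    have "dist y x < e"
      using that e(1) unfolding d_def mem_cball by (simp add: dist_commute)
    then have "\<bar>h y - h x\<bar> < h x / 2"
      using e(2) by (simp add: dist_real_def)
    then show ?thesis by linarith
  qed
  have int_d: "h integrable_on cball x d"
    using integrable_on_subset_of_compact[OF continuous_on_subset[OF assms(2) d(2)]] by auto
  have "0 < h x / 2 * Henstock_Kurzweil_Integration.content (cball x d)"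
    using assms(6) content_cball_pos[OF d(1)] by simp
  also have "\<dots> = integral (cball x d) (\<lambda>_. h x / 2)"
    using lmeasure_integral[OF lmeasurable_cball, of x d]
      integral_mult_right[of "cball x d" "h x / 2" "\<lambda>_. 1"] by simp
  also have "\<dots> \<le> integral (cball x d) h"
    using d_lower by (intro integral_le[OF integrable_on_const int_d]) auto
  also have "\<dots> \<le> integral S h"
    using assms(4) d(2) by (intro integral_subset_le[OF d(2) int_d assms(3)]) auto
  finally show ?thesis .
qed

lemma positive_stationary_solutionI:
  assumes "neumann_bc \<Omega> v"
    and "\<And>x. x \<in> \<Omega> \<Longrightarrow> (\<lambda>y. A y *v grad v y) differentiable (at x)"
    and "(\<lambda>y. k y * \<bar>v y\<bar> powr p) integrable_on \<Omega>"
    and "\<And>x. x \<in> \<Omega> \<Longrightarrow> v x * (r x - integral \<Omega> (\<lambda>y. k y * \<bar>v y\<bar> powr p))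
                 + divergence (\<lambda>y. A y *v grad v y) x = 0"
    and "\<And>x. x \<in> \<Omega> \<Longrightarrow> v x > 0"
  shows "positive_stationary_solution \<Omega> A r k p v"
  using assms
  unfolding positive_stationary_solution_def nonlocal_solution_def
  by (auto intro: DERIV_const)

lemma weighted_powr_integral_pos:
  fixes k u :: "'a::euclidean_space \<Rightarrow> real"
  assumes "open \<Omega>" "bounded \<Omega>" "\<Omega> \<noteq> {}" "p > 0"
    and "continuous_on (closure \<Omega>) k" "continuous_on (closure \<Omega>) u"
    and "\<forall>x\<in>\<Omega>. k x > 0" "\<forall>x\<in>\<Omega>. u x > 0"
  shows "(\<lambda>y. k y * \<bar>u y\<bar> powr p) integrable_on \<Omega>"
    and "integral \<Omega> (\<lambda>y. k y * \<bar>u y\<bar> powr p) > 0"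
proof -
  have cont: "continuous_on (closure \<Omega>) (\<lambda>y. k y * \<bar>u y\<bar> powr p)"
    using assms(4-6) by (intro continuous_intros continuous_on_powr') auto
  show int: "(\<lambda>y. k y * \<bar>u y\<bar> powr p) integrable_on \<Omega>"
    using assms(1,2)
    by (intro integrable_on_subset_of_compact[OF cont compact_closure[THEN iffD2] closure_subset]
      lmeasurable_open)
  obtain x\<^sub>0 where "x\<^sub>0 \<in> \<Omega>"
    using assms(3) by blast
  then show "integral \<Omega> (\<lambda>y. k y * \<bar>u y\<bar> powr p) > 0"
    using assms(7,8)
    by (intro integral_pos_continuous[OF assms(1) continuous_on_subset[OF cont closure_subset] int])
      (auto intro: less_imp_le)
qed

lemma positive_stationary_solution_cmult_eigenfunction:
  assumes "open \<Omega>" "neumann_eigenpair \<Omega> A r lam \<phi>" "\<forall>x\<in>\<Omega>. \<phi> x > 0" "\<mu> > 0"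
    and "(\<lambda>y. k y * \<bar>\<phi> y\<bar> powr p) integrable_on \<Omega>"
    and "\<mu> powr p * integral \<Omega> (\<lambda>y. k y * \<bar>\<phi> y\<bar> powr p) = - lam"
  shows "positive_stationary_solution \<Omega> A r k p (\<lambda>x. \<mu> * \<phi> x)"
proof -
  have bc: "neumann_bc \<Omega> \<phi>"
    and flux: "\<forall>x\<in>\<Omega>. (\<lambda>y. A y *v grad \<phi> y) differentiable (at x)"
    and eigen: "\<forall>x\<in>\<Omega>. divergence (\<lambda>y. A y *v grad \<phi> y) x + r x * \<phi> x = - lam * \<phi> x"
    using assms(2) unfolding neumann_eigenpair_def by auto
  have \<phi>_diff: "\<forall>x\<in>\<Omega>. \<phi> differentiable (at x)"
    using bc unfolding neumann_bc_def by auto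
  have mass: "(\<lambda>y. k y * \<bar>\<mu> * \<phi> y\<bar> powr p) = (\<lambda>y. \<mu> powr p * (k y * \<bar>\<phi> y\<bar> powr p))"
    using assms(4) by (simp add: abs_mult powr_mult mult.left_commute)
  show ?thesis
  proof (rule positive_stationary_solutionI)
    show "neumann_bc \<Omega> (\<lambda>x. \<mu> * \<phi> x)"
      using bc by (rule neumann_bc_cmult)
    show "(\<lambda>y. k y * \<bar>\<mu> * \<phi> y\<bar> powr p) integrable_on \<Omega>"
      unfolding mass using integrable_on_cmult_left[OF assms(5), of "\<mu> powr p"] by simp
    show "(\<lambda>y. A y *v grad (\<lambda>z. \<mu> * \<phi> z) y) differentiable (at x)" if "x \<in> \<Omega>" for x
      using assms(1) that \<phi>_diff flux by (intro differentiable_flux_cmult) auto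
    show "\<mu> * \<phi> x > 0" if "x \<in> \<Omega>" for x
      using assms(3,4) that by simp
    show "\<mu> * \<phi> x * (r x - integral \<Omega> (\<lambda>y. k y * \<bar>\<mu> * \<phi> y\<bar> powr p))
        + divergence (\<lambda>y. A y *v grad (\<lambda>z. \<mu> * \<phi> z) y) x = 0" if "x \<in> \<Omega>" for x
    proof -
      have "divergence (\<lambda>y. A y *v grad (\<lambda>z. \<mu> * \<phi> z) y) x
          = \<mu> * divergence (\<lambda>y. A y *v grad \<phi> y) x"
        using assms(1) that \<phi>_diff flux by (intro divergence_flux_cmult) auto
      moreover have "integral \<Omega> (\<lambda>y. k y * \<bar>\<mu> * \<phi> y\<bar> powr p) = - lam"
        using assms(6) by (simp add: mass)
      moreover have "\<mu> * (divergence (\<lambda>y. A y *v grad \<phi> y) x + r x * \<phi> x + lam * \<phi> x) = 0"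
        using eigen that by simp
      ultimately show ?thesis
        by (simp add: algebra_simps)
    qed
  qed
qed

theorem lemma3p1:
  fixes \<Omega> :: "(real^'n) set"
    and A :: "real^'n \<Rightarrow> real^'n^'n"
    and r k \<phi>\<^sub>1 :: "real^'n \<Rightarrow> real"
    and p lam\<^sub>1 :: real
  assumes "lipschitz_domain \<Omega>"
    and "smooth_matrix_on (closure \<Omega>) A"
    and "uniformly_elliptic_on (closure \<Omega>) A"
    and "\<exists>C. C-lipschitz_on (closure \<Omega>) r" and "\<forall>x\<in>closure \<Omega>. r x > 0"
    and "\<exists>C. C-lipschitz_on (closure \<Omega>) k" and "\<forall>x\<in>closure \<Omega>. k x > 0"
    and "p \<ge> 1"
    and "first_neumann_eigenvalue \<Omega> A r lam\<^sub>1"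
    and "neumann_eigenpair \<Omega> A r lam\<^sub>1 \<phi>\<^sub>1"
    and "\<forall>x\<in>\<Omega>. \<phi>\<^sub>1 x > 0"
    and "lam\<^sub>1 < 0"
  shows "\<exists>\<mu>>0. positive_stationary_solution \<Omega> A r k p (\<lambda>x. \<mu> * \<phi>\<^sub>1 x)"
proof -
  have \<Omega>: "open \<Omega>" "bounded \<Omega>" "\<Omega> \<noteq> {}"
    using assms(1) unfolding lipschitz_domain_def by auto
  have \<phi>\<^sub>1_cont: "continuous_on (closure \<Omega>) \<phi>\<^sub>1"
    using assms(10) unfolding neumann_eigenpair_def neumann_bc_def by blast
  have k_cont: "continuous_on (closure \<Omega>) k"
    using assms(6) lipschitz_on_continuous_on by blast
  have "\<forall>x\<in>\<Omega>. k x > 0" "p > 0"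
    using assms(7,8) closure_subset by auto
  note weighted = weighted_powr_integral_pos[OF \<Omega> \<open>p > 0\<close> k_cont \<phi>\<^sub>1_cont this(1) assms(11)]
  define \<mu> where "\<mu> = (- lam\<^sub>1 / integral \<Omega> (\<lambda>y. k y * \<bar>\<phi>\<^sub>1 y\<bar> powr p)) powr (1 / p)"
  have "\<mu> > 0" and "\<mu> powr p * integral \<Omega> (\<lambda>y. k y * \<bar>\<phi>\<^sub>1 y\<bar> powr p) = - lam\<^sub>1"
    unfolding \<mu>_def using weighted(2) assms(8,12) by (simp_all add: powr_powr)
  then show ?thesis
    using positive_stationary_solution_cmult_eigenfunction[OF \<Omega>(1) assms(10,11) _ weighted(1)] by blast
qed

end
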